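(* Let $(H,\circ,N,\star,\boxdot)$ be a right bracoid, i.e. a right skew bracoid in which $(N,\star)$ is abelian. Then for every $h\in H$ the map $\beta(h):N\to N$, $\eta^{\beta(h)}=\overline{\eta}\star(\eta\boxdot h)\star\overline{(e_N\boxdot h)}$, is an endomorphism of the group $(N,\star)$.
   Context: For a group $(N,\star)$, $e_N$ denotes its identity and $\overline{\eta}$ the inverse of $\eta$. A right skew bracoid is a 5-tuple $(H,\circ,N,\star,\boxdot)$ where $(H,\circ)$ and $(N,\star)$ are groups and $\boxdot$ is a transitive right action of $(H,\circ)$ on the set $N$ such that $(\eta\star\mu)\boxdot h=(\eta\boxdot h)\star\overline{(e_N\boxdot h)}\star(\mu\boxdot h)$ for all $h\in H$, $\eta,\mu\in N$. *)

theory Defs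
  imports "HOL-Algebra.Group"
begin

definition transitive_right_action :: "('h, 'c) monoid_scheme \<Rightarrow> 'n set \<Rightarrow> ('n \<Rightarrow> 'h \<Rightarrow> 'n) \<Rightarrow> bool" where
  "transitive_right_action H S act \<longleftrightarrow>
     (\<forall>x\<in>S. \<forall>h\<in>carrier H. act x h \<in> S) \<and>
     (\<forall>x\<in>S. act x \<one>\<^bsub>H\<^esub> = x) \<and>
     (\<forall>x\<in>S. \<forall>g\<in>carrier H. \<forall>h\<in>carrier H. act (act x g) h = act x (g \<otimes>\<^bsub>H\<^esub> h)) \<and>
     (\<forall>x\<in>S. \<forall>y\<in>S. \<exists>h\<in>carrier H. act x h = y)"

definition right_skew_bracoid :: "('h, 'c) monoid_scheme \<Rightarrow> ('n, 'd) monoid_scheme \<Rightarrow> ('n \<Rightarrow> 'h \<Rightarrow> 'n) \<Rightarrow> bool" where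
  "right_skew_bracoid H N act \<longleftrightarrow>
     group H \<and> group N \<and> transitive_right_action H (carrier N) act \<and>
     (\<forall>h\<in>carrier H. \<forall>\<eta>\<in>carrier N. \<forall>\<mu>\<in>carrier N.
        act (\<eta> \<otimes>\<^bsub>N\<^esub> \<mu>) h =
          act \<eta> h \<otimes>\<^bsub>N\<^esub> inv\<^bsub>N\<^esub> (act \<one>\<^bsub>N\<^esub> h) \<otimes>\<^bsub>N\<^esub> act \<mu> h)"

definition right_bracoid :: "('h, 'c) monoid_scheme \<Rightarrow> ('n, 'd) monoid_scheme \<Rightarrow> ('n \<Rightarrow> 'h \<Rightarrow> 'n) \<Rightarrow> bool" where
  "right_bracoid H N act \<longleftrightarrow> right_skew_bracoid H N act \<and> comm_group N"

definition bracoid_beta :: "('n, 'd) monoid_scheme \<Rightarrow> ('n \<Rightarrow> 'h \<Rightarrow> 'n) \<Rightarrow> 'h \<Rightarrow> 'n \<Rightarrow> 'n" where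
  "bracoid_beta N act h = (\<lambda>\<eta>. inv\<^bsub>N\<^esub> \<eta> \<otimes>\<^bsub>N\<^esub> act \<eta> h \<otimes>\<^bsub>N\<^esub> inv\<^bsub>N\<^esub> (act \<one>\<^bsub>N\<^esub> h))"

end

theory Submission
  imports Defs
begin

text \<open>The bracoid axiom says that f = (\<lambda>\<eta>. \<eta> \<boxdot> h) is affine:
  f(\<eta> \<star> \<mu>) = f \<eta> \<star> f(e)\<inverse> \<star> f \<mu>. Hence \<eta> \<mapsto> f \<eta> \<star> f(e)\<inverse> is a homomorphism,
  and in an abelian group so is its product with inversion, which is \<beta>(h).\<close>

lemma (in comm_group) inv_mult_affine_map_hom:
  assumes f_closed: "f \<in> carrier G \<rightarrow> carrier G"
    and f_affine: "\<And>x y. x \<in> carrier G \<Longrightarrow> y \<in> carrier G \<Longrightarrow>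
      f (x \<otimes> y) = f x \<otimes> inv (f \<one>) \<otimes> f y"
  shows "(\<lambda>x. inv x \<otimes> f x \<otimes> inv (f \<one>)) \<in> hom G G"
proof (rule homI)
  fix x assume "x \<in> carrier G"
  then show "inv x \<otimes> f x \<otimes> inv (f \<one>) \<in> carrier G"
    using f_closed by auto
next
  fix x y assume x: "x \<in> carrier G" and y: "y \<in> carrier G"
  have closed: "f x \<in> carrier G" "f y \<in> carrier G" "f \<one> \<in> carrier G"
    using f_closed x y by auto
  have "inv (x \<otimes> y) \<otimes> f (x \<otimes> y) \<otimes> inv (f \<one>)
      = (inv x \<otimes> inv y) \<otimes> (f x \<otimes> inv (f \<one>) \<otimes> f y) \<otimes> inv (f \<one>)"
    using x y by (simp add: f_affine inv_mult)
  also have "\<dots> = (inv x \<otimes> f x \<otimes> inv (f \<one>)) \<otimes> (inv y \<otimes> f y \<otimes> inv (f \<one>))"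
    using x y closed by (simp add: m_ac)
  finally show "inv (x \<otimes> y) \<otimes> f (x \<otimes> y) \<otimes> inv (f \<one>)
      = (inv x \<otimes> f x \<otimes> inv (f \<one>)) \<otimes> (inv y \<otimes> f y \<otimes> inv (f \<one>))" .
qed

lemma right_skew_bracoid_act_closed:
  assumes "right_skew_bracoid H N act" and "h \<in> carrier H"
  shows "(\<lambda>\<eta>. act \<eta> h) \<in> carrier N \<rightarrow> carrier N"
  using assms unfolding right_skew_bracoid_def transitive_right_action_def by auto

lemma right_skew_bracoid_act_affine:
  assumes "right_skew_bracoid H N act" and "h \<in> carrier H"
    and "\<eta> \<in> carrier N" and "\<mu> \<in> carrier N"
  shows "act (\<eta> \<otimes>\<^bsub>N\<^esub> \<mu>) h = act \<eta> h \<otimes>\<^bsub>N\<^esub> inv\<^bsub>N\<^esub> (act \<one>\<^bsub>N\<^esub> h) \<otimes>\<^bsub>N\<^esub> act \<mu> h"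
  using assms unfolding right_skew_bracoid_def by blast

theorem corollary2p9:
  fixes H :: "('h, 'c) monoid_scheme" and N :: "('n, 'd) monoid_scheme"
    and act :: "'n \<Rightarrow> 'h \<Rightarrow> 'n"
  assumes "right_bracoid H N act"
    and "h \<in> carrier H"
  shows "bracoid_beta N act h \<in> hom N N"
proof -
  have skew: "right_skew_bracoid H N act" and "comm_group N"
    using assms(1) unfolding right_bracoid_def by auto
  then interpret comm_group N by simp
  show ?thesis
    unfolding bracoid_beta_def
    using inv_mult_affine_map_hom[of "\<lambda>\<eta>. act \<eta> h"]
      right_skew_bracoid_act_closed[OF skew assms(2)]
      right_skew_bracoid_act_affine[OF skew assms(2)]
    by blast
qed

end
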